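(* Let $N\ge2$. Let $\mathcal H$ be the set of marginal distributions $F$ (as in the context) for which the revenue function $R(x)=x(1-F(x))$ is concave on $[0,1]$. Then the Second Price Auction with $\mathrm{Beta}(\frac1{N-1},1)$ Distributed Reserves robustly dominates the posted price mechanism for $\mathcal H$: for every $F\in\mathcal H$ its revenue guarantee is at least $\max_{x\in[0,1]}x(1-F(x))$, and the inequality is strict for some $F\in\mathcal H$.
   Context: A single indivisible good is sold to $N$ bidders with private values $v_i\in[0,1]$, each with the same marginal cdf $F$ on $[0,1]$ (point masses allowed, and $F$ may be fully continuous). $\Pi(F)$ is the set of probability measures on $[0,1]^N$ with all one-dimensional marginals $F$. The revenue guarantee of a mechanism $(q,t)$ is $\inf_{\pi\in\Pi(F)}\int\sum_it_i\,d\pi$. The Second Price Auction with $\mathrm{Beta}(\frac1{N-1},1)$ Distributed Reserves: for a profile $v$ with highest value $v_{(1)}$ and second highest $v_{(2)}$, if exactly one bidder $i$ has value $v_{(1)}$ then she gets the good with probability $v_{(1)}^{1/(N-1)}$ and pays $\frac1Nv_{(1)}^{N/(N-1)}+\frac{N-1}Nv_{(2)}^{N/(N-1)}$; if $K\ge2$ bidders tie at $v_{(1)}$, each gets probability $v_{(1)}^{1/(N-1)}/K$ and pays $v_{(1)}^{N/(N-1)}/K$; all others get and pay nothing. The posted price mechanism's revenue guarantee is $\max_{x\in[0,1]}x(1-F(x))$. For a set $\mathcal H$ of marginal distributions, $M_1$ robustly dominates $M_2$ for $\mathcal H$ if the revenue guarantee of $M_1$ is weakly greater than that of $M_2$ for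 every $F\in\mathcal H$ and strictly greater for some $F\in\mathcal H$. *)

theory Defs
  imports "HOL-Probability.Probability"
begin

definition marginal_dists :: "real measure set" where
  "marginal_dists = {mu. prob_space mu \<and> sets mu = sets borel \<and> measure mu {0..1} = 1}"

definition couplings :: "real measure \<Rightarrow> (real ^ 'n) measure set" where
  "couplings mu = {pi. prob_space pi \<and> sets pi = sets borel \<and>
                       (\<forall>i. distr pi borel (\<lambda>v. v $ i) = mu)}"

definition revenue_guarantee :: "((real ^ 'n) \<Rightarrow> 'n \<Rightarrow> real) \<Rightarrow> real measure \<Rightarrow> real" where
  "revenue_guarantee t mu =
     (INF pi \<in> (couplings mu :: (real ^ 'n) measure set). integral\<^sup>L pi (\<lambda>v. \<Sum>i\<in>UNIV. t v i))"

definition spa_beta_payment :: "(real ^ 'n) \<Rightarrow> 'n \<Rightarrow> real" where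
  "spa_beta_payment v i =
     (let N = real CARD('n);
          a = N / (N - 1);
          v1 = Max (range (\<lambda>j. v $ j));
          K = card {j. v $ j = v1}
      in if v $ i = v1 then
           (if K = 1 then (1 / N) * v1 powr a
                          + ((N - 1) / N) * (Max ((\<lambda>j. v $ j) ` (UNIV - {i}))) powr a
            else v1 powr a / real K)
         else 0)"

definition posted_price_guarantee :: "real measure \<Rightarrow> real" where
  "posted_price_guarantee mu = (SUP x \<in> {0..1}. x * (1 - cdf mu x))"

definition robustly_dominates ::
  "(real measure \<Rightarrow> real) \<Rightarrow> (real measure \<Rightarrow> real) \<Rightarrow> real measure set \<Rightarrow> bool" where
  "robustly_dominates G1 G2 H \<longleftrightarrow>
     (\<forall>mu\<in>H. G2 mu \<le> G1 mu) \<and> (\<exists>mu\<in>H. G2 mu < G1 mu)"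

end

theory Submission
  imports Defs
begin

text \<open>Let a = N/(N-1). On every value profile the auction collects at least
  (1/N) * sum_i v_i^a: with a unique winner its revenue is (1/N) v_(1)^a + ((N-1)/N) v_(2)^a
  and every losing value is at most v_(2), with a tie it is v_(1)^a. This bound depends only
  on the marginals, so the revenue guarantee is at least the moment E[X^a] of F.

  If the revenue curve R x = x (1 - F x) is concave, then, since R 0 = R 1 = 0, it lies above
  the tent of height R x0 over x0, and R t \<le> t P(X \<ge> t) turns this into a lower bound on the
  tail. Inserting it into the layer-cake formula E[X^a] = \<integral> a t^(a-1) P(X \<ge> t) dt and
  integrating the tent, Bernoulli's inequality for the exponent a - 1 \<in> (0,1] gives
  E[X^a] \<ge> R x0. Strictness is witnessed by the uniform distribution: posted prices earn 1/4,
  while E[X^a] = 1/(a+1) > 1/4.\<close>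

section \<open>Revenue of the second price auction with random reserves\<close>

definition highest_value :: "real ^ 'n \<Rightarrow> real" where
  "highest_value v = Max (range (\<lambda>j. v $ j))"

lemma highest_value_ge: "v $ j \<le> highest_value (v :: real ^ 'n::finite)"
  unfolding highest_value_def by (rule Max_ge) auto

lemma highest_value_attained:
  obtains i where "v $ i = highest_value (v :: real ^ 'n::finite)"
proof -
  have "highest_value v \<in> range (\<lambda>j. v $ j)"
    unfolding highest_value_def by (rule Max_in) auto
  then show thesis using that by auto
qed

lemma borel_measurable_highest_value [measurable]:
  "(highest_value :: real ^ 'n::finite \<Rightarrow> real) \<in> borel_measurable borel"
  unfolding highest_value_def by measurable

text \<open>Counting the tied bidders by a sum and testing uniqueness by a quantifier makes the
  payment rule accessible to the measurability prover.\<close>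
lemma spa_beta_payment_eq:
  fixes v :: "real ^ 'n::finite"
  shows "spa_beta_payment v i =
    (let N = real CARD('n); a = N / (N - 1) in
     if v $ i = highest_value v then
       (if \<forall>j\<in>UNIV - {i}. v $ j \<noteq> highest_value v
        then (1 / N) * highest_value v powr a
               + ((N - 1) / N) * Max ((\<lambda>j. v $ j) ` (UNIV - {i})) powr a
        else highest_value v powr a / (\<Sum>j\<in>UNIV. if v $ j = highest_value v then 1 else 0))
     else 0)"
proof -
  have unique: "card {j. v $ j = highest_value v} = 1
      \<longleftrightarrow> (\<forall>j\<in>UNIV - {i}. v $ j \<noteq> highest_value v)"
    if "v $ i = highest_value v"
    using that by (auto simp: card_1_singleton_iff) (metis (mono_tags) mem_Collect_eq singletonD)
  have "real (card {j. v $ j = highest_value v}) = (\<Sum>j\<in>UNIV. if v $ j = highest_value v then 1 else 0)"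
    by (simp add: sum.If_cases)
  then show ?thesis
    unfolding spa_beta_payment_def Let_def highest_value_def[symmetric] using unique by auto
qed

lemma borel_measurable_spa_beta_payment [measurable]:
  "(\<lambda>v. spa_beta_payment v i) \<in> borel_measurable (borel :: (real ^ 'n::finite) measure)"
  unfolding spa_beta_payment_eq Let_def by measurable

lemma spa_beta_revenue_unique_winner:
  fixes v :: "real ^ 'n::finite"
  assumes winner: "\<And>j. j \<noteq> i \<Longrightarrow> v $ j < v $ i"
  defines "N \<equiv> real CARD('n)"
  defines "a \<equiv> N / (N - 1)"
  shows "(\<Sum>k\<in>UNIV. spa_beta_payment v k)
           = (1 / N) * v $ i powr a + ((N - 1) / N) * Max ((\<lambda>j. v $ j) ` (UNIV - {i})) powr a"
proof -
  have highest: "highest_value v = v $ i"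
    using winner highest_value_ge[of v i] highest_value_attained[of v]
    by (metis order.strict_iff_not)
  have "{j. v $ j = v $ i} = {i}"
    using winner by auto (metis less_irrefl)
  then have "spa_beta_payment v k = (if k = i then
      (1 / N) * v $ i powr a + ((N - 1) / N) * Max ((\<lambda>j. v $ j) ` (UNIV - {i})) powr a else 0)" for k
    using winner[of k]
    unfolding spa_beta_payment_def Let_def highest_value_def[symmetric] highest N_def a_def
    by auto
  then show ?thesis by simp
qed

lemma spa_beta_revenue_tie:
  fixes v :: "real ^ 'n::finite"
  assumes "i \<noteq> k" "v $ i = highest_value v" "v $ k = highest_value v"
  defines "N \<equiv> real CARD('n)"
  defines "a \<equiv> N / (N - 1)"
  shows "(\<Sum>j\<in>UNIV. spa_beta_payment v j) = highest_value v powr a"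
proof -
  define T where "T = {j. v $ j = highest_value v}"
  define p where "p = highest_value v powr a"
  have "{i, k} \<subseteq> T" using assms by (auto simp: T_def)
  then have "card T \<ge> 2" using assms(1) card_mono[of T "{i, k}"] by auto
  then have "spa_beta_payment v j = (if j \<in> T then p / card T else 0)" for j
    unfolding spa_beta_payment_def Let_def highest_value_def[symmetric] T_def[symmetric] p_def a_def N_def
    by (auto simp: T_def)
  then have "(\<Sum>j\<in>UNIV. spa_beta_payment v j) = card T * (p / card T)"
    using \<open>card T \<ge> 2\<close> by (auto simp: sum.If_cases Int_absorb1)
  also have "\<dots> = p" using \<open>card T \<ge> 2\<close> by auto
  finally show ?thesis by (simp add: p_def)
qed

lemma spa_beta_revenue_bounds_unique_winner:
  fixes v :: "real ^ 'n::finite"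
  assumes N2: "CARD('n) \<ge> 2" and nonneg: "\<And>j. 0 \<le> v $ j"
    and winner: "\<And>j. j \<noteq> i \<Longrightarrow> v $ j < v $ i"
  defines "N \<equiv> real CARD('n)"
  defines "a \<equiv> N / (N - 1)"
  shows "(1 / N) * (\<Sum>j\<in>UNIV. v $ j powr a) \<le> (\<Sum>k\<in>UNIV. spa_beta_payment v k)
           \<and> (\<Sum>k\<in>UNIV. spa_beta_payment v k) \<le> v $ i powr a"
proof -
  let ?R = "\<Sum>k\<in>UNIV. spa_beta_payment v k" and ?M = "Max ((\<lambda>j. v $ j) ` (UNIV - {i}))"
  have N: "N \<ge> 2" using N2 by (simp add: N_def)
  have mono: "x powr a \<le> y powr a" if "0 \<le> x" "x \<le> y" for x y
    using that N by (intro powr_mono2) (auto simp: a_def)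
  have card_others: "card (UNIV - {i}) = N - 1"
    using N2 by (simp add: N_def card_Diff_singleton)
  have "UNIV - {i} \<noteq> {}"
  proof
    assume "UNIV - {i} = {}"
    then have "card (UNIV - {i}) = 0" by (metis card.empty)
    with card_others N show False by simp
  qed
  then have "?M \<in> (\<lambda>j. v $ j) ` (UNIV - {i})" by (intro Max_in) auto
  then have M: "0 \<le> ?M" "?M \<le> v $ i" using nonneg winner by (auto intro: less_imp_le)
  have R: "?R = (1 / N) * v $ i powr a + ((N - 1) / N) * ?M powr a"
    using spa_beta_revenue_unique_winner[of i v] winner by (simp add: N_def a_def)
  have "(\<Sum>j\<in>UNIV. v $ j powr a) = v $ i powr a + (\<Sum>j\<in>UNIV - {i}. v $ j powr a)"
    by (simp add: sum.remove)
  also have "\<dots> \<le> v $ i powr a + (\<Sum>j\<in>UNIV - {i}. ?M powr a)"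
    using nonneg mono by (intro add_mono sum_mono) (auto intro: Max_ge)
  also have "\<dots> = v $ i powr a + (N - 1) * ?M powr a"
    using card_others by simp
  finally have "(1 / N) * (\<Sum>j\<in>UNIV. v $ j powr a) \<le> ?R"
    using N R by (simp add: field_simps)
  moreover have "((N - 1) / N) * ?M powr a \<le> ((N - 1) / N) * v $ i powr a"
    using M mono N by (intro mult_left_mono) auto
  moreover have "(1 / N) * v $ i powr a + ((N - 1) / N) * v $ i powr a = v $ i powr a"
    using N by (simp add: field_simps)
  ultimately show ?thesis using R by linarith
qed

lemma spa_beta_revenue_bounds:
  fixes v :: "real ^ 'n::finite"
  assumes N2: "CARD('n) \<ge> 2" and nonneg: "\<And>j. 0 \<le> v $ j"
  defines "N \<equiv> real CARD('n)"
  defines "a \<equiv> N / (N - 1)"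
  shows "(1 / N) * (\<Sum>j\<in>UNIV. v $ j powr a) \<le> (\<Sum>i\<in>UNIV. spa_beta_payment v i)"
    and "(\<Sum>i\<in>UNIV. spa_beta_payment v i) \<le> highest_value v powr a"
proof -
  let ?m = "highest_value v" and ?R = "\<Sum>i\<in>UNIV. spa_beta_payment v i"
  obtain i where i: "v $ i = ?m" using highest_value_attained by blast
  have "(1 / N) * (\<Sum>j\<in>UNIV. v $ j powr a) \<le> ?R \<and> ?R \<le> ?m powr a"
  proof (cases "\<forall>j. j \<noteq> i \<longrightarrow> v $ j < v $ i")
    case True
    then show ?thesis
      using spa_beta_revenue_bounds_unique_winner[OF N2 nonneg, of i] i by (simp add: N_def a_def)
  next
    case False
    then obtain k where "k \<noteq> i" "v $ k = ?m"
      using i highest_value_ge[of v] by (metis order.not_eq_order_implies_strict)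
    then have R: "?R = ?m powr a"
      using spa_beta_revenue_tie[of k i v] i by (simp add: N_def a_def)
    have "(\<Sum>j\<in>UNIV. v $ j powr a) \<le> (\<Sum>j\<in>(UNIV::'n set). ?m powr a)"
      using nonneg highest_value_ge[of v] N2
      by (intro sum_mono powr_mono2) (auto simp: a_def N_def)
    then show ?thesis
      using N2 R by (simp add: N_def field_simps)
  qed
  then show "(1 / N) * (\<Sum>j\<in>UNIV. v $ j powr a) \<le> ?R" and "?R \<le> ?m powr a"
    by auto
qed

lemma abs_spa_beta_revenue_le_one:
  fixes v :: "real ^ 'n::finite"
  assumes N2: "CARD('n) \<ge> 2" and unit: "\<And>j. v $ j \<in> {0..1}"
  shows "\<bar>\<Sum>i\<in>UNIV. spa_beta_payment v i\<bar> \<le> 1"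
proof -
  define a where "a = real CARD('n) / (real CARD('n) - 1)"
  have nonneg: "0 \<le> v $ j" for j using unit[of j] by simp
  obtain i where i: "v $ i = highest_value v" using highest_value_attained by blast
  have "highest_value v powr a \<le> 1"
    using unit[of i] N2 unfolding i by (intro powr_le1) (auto simp: a_def)
  moreover have "0 \<le> (1 / real CARD('n)) * (\<Sum>j\<in>UNIV. v $ j powr a)"
    by (simp add: sum_nonneg)
  ultimately show ?thesis
    using spa_beta_revenue_bounds[OF N2 nonneg] by (simp add: a_def)
qed

section \<open>Revenue guarantee\<close>

lemma real_distribution_marginal:
  "mu \<in> marginal_dists \<Longrightarrow> real_distribution mu"
  by (simp add: marginal_dists_def real_distribution_def real_distribution_axioms_def)

lemma AE_marginal_unit_interval:
  assumes "mu \<in> marginal_dists"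
  shows "AE x in mu. x \<in> {0..1}"
proof -
  interpret real_distribution mu using assms by (rule real_distribution_marginal)
  show ?thesis using assms by (intro AE_prob_1) (simp add: marginal_dists_def)
qed

lemma integrable_powr_marginal:
  assumes "mu \<in> marginal_dists" "0 \<le> a"
  shows "integrable mu (\<lambda>x. x powr a)"
proof -
  interpret real_distribution mu using assms(1) by (rule real_distribution_marginal)
  have "AE x in mu. norm (x powr a) \<le> 1"
    using AE_marginal_unit_interval[OF assms(1)]
    by eventually_elim (use assms(2) in \<open>auto intro: powr_le1\<close>)
  then show ?thesis by (intro integrable_const_bound[where B = 1]) simp_all
qed

lemma measurable_coupling_component:
  assumes "Q \<in> couplings mu"
  shows "(\<lambda>v::real ^ 'n. v $ j) \<in> measurable Q borel"
proof -
  have sets_Q: "sets Q = sets borel" using assms by (simp add: couplings_def)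
  show ?thesis unfolding measurable_cong_sets[OF sets_Q refl] by simp
qed

lemma distr_coupling_component:
  "Q \<in> couplings mu \<Longrightarrow> distr Q borel (\<lambda>v::real ^ 'n. v $ j) = mu"
  by (simp add: couplings_def)

lemma integral_coupling_component:
  fixes f :: "real \<Rightarrow> real"
  assumes "Q \<in> couplings mu" "f \<in> borel_measurable borel"
  shows "integral\<^sup>L Q (\<lambda>v::real ^ 'n. f (v $ j)) = integral\<^sup>L mu f"
  using integral_distr[OF measurable_coupling_component[OF assms(1)] assms(2)]
  unfolding distr_coupling_component[OF assms(1)] by simp

lemma integrable_coupling_component:
  fixes f :: "real \<Rightarrow> real"
  assumes "Q \<in> couplings mu" "f \<in> borel_measurable borel"
  shows "integrable Q (\<lambda>v::real ^ 'n. f (v $ j)) \<longleftrightarrow> integrable mu f"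
  using integrable_distr_eq[OF measurable_coupling_component[OF assms(1)] assms(2)]
  unfolding distr_coupling_component[OF assms(1)] by simp

lemma AE_coupling_component:
  assumes "Q \<in> couplings mu" "AE x in mu. P x"
  shows "AE v in Q. P ((v :: real ^ 'n) $ j)"
  using assms(2) unfolding distr_coupling_component[OF assms(1), symmetric, of j]
  by (rule AE_distrD[OF measurable_coupling_component[OF assms(1)]])

lemma couplings_nonempty:
  assumes "real_distribution mu"
  shows "(couplings mu :: (real ^ 'n::finite) measure set) \<noteq> {}"
proof -
  interpret real_distribution mu by fact
  let ?diag = "distr mu borel (\<lambda>x. \<chi> i. x) :: (real ^ 'n) measure"
  have diag: "(\<lambda>x. \<chi> i. x) \<in> measurable mu (borel :: (real ^ 'n) measure)"
    unfolding measurable_cong_sets[OF events_eq_borel refl]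
    by (intro borel_measurable_continuous_onI continuous_intros)
  have "?diag \<in> couplings mu"
    unfolding couplings_def
  proof (intro CollectI conjI allI)
    show "prob_space ?diag" by (rule prob_space_distr[OF diag])
    fix i
    have "distr ?diag borel (\<lambda>v. v $ i) = distr mu borel ((\<lambda>v. v $ i) \<circ> (\<lambda>x. \<chi> i. x))"
      by (rule distr_distr[OF _ diag]) simp
    also have "\<dots> = mu" by (simp add: o_def distr_id2)
    finally show "distr ?diag borel (\<lambda>v. v $ i) = mu" .
  qed simp
  then show ?thesis by blast
qed

lemma expected_spa_beta_revenue_ge_moment:
  assumes N2: "CARD('n::finite) \<ge> 2" and mu: "mu \<in> marginal_dists"
    and Q: "Q \<in> (couplings mu :: (real ^ 'n) measure set)"
  defines "N \<equiv> real CARD('n)"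
  defines "a \<equiv> N / (N - 1)"
  shows "integral\<^sup>L mu (\<lambda>x. x powr a) \<le> integral\<^sup>L Q (\<lambda>v. \<Sum>i\<in>UNIV. spa_beta_payment v i)"
proof -
  interpret prob_space Q using Q by (simp add: couplings_def)
  have sets_Q: "sets Q = sets borel" using Q by (simp add: couplings_def)
  have a: "0 < a" using N2 by (simp add: a_def N_def)
  have unit_cube: "AE v in Q. \<forall>j\<in>UNIV. v $ j \<in> {0..1}"
    by (intro AE_finite_allI AE_coupling_component[OF Q] AE_marginal_unit_interval[OF mu]) simp_all
  have lower: "AE v in Q. (1 / N) * (\<Sum>j\<in>UNIV. v $ j powr a) \<le> (\<Sum>i\<in>UNIV. spa_beta_payment v i)"
    using unit_cube
    by eventually_elim (use spa_beta_revenue_bounds(1)[OF N2] in \<open>simp add: N_def a_def\<close>)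
  have bounded: "AE v in Q. \<bar>\<Sum>i\<in>UNIV. spa_beta_payment v i\<bar> \<le> 1"
    using unit_cube by eventually_elim (rule abs_spa_beta_revenue_le_one[OF N2], simp)
  have integrable_revenue: "integrable Q (\<lambda>v. \<Sum>i\<in>UNIV. spa_beta_payment v i)"
    using bounded
    by (intro integrable_const_bound[where B = 1]) (simp_all add: measurable_cong_sets[OF sets_Q refl])
  have integrable_component: "integrable Q (\<lambda>v. v $ j powr a)" for j
    using integrable_coupling_component[OF Q, of "\<lambda>x. x powr a" j]
      integrable_powr_marginal[OF mu, of a] a
    by simp
  have "integral\<^sup>L mu (\<lambda>x. x powr a) = (1 / N) * (\<Sum>j\<in>UNIV. integral\<^sup>L Q (\<lambda>v. v $ j powr a))"
    using integral_coupling_component[OF Q, of "\<lambda>x. x powr a"] N2 by (simp add: N_def)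
  also have "\<dots> = integral\<^sup>L Q (\<lambda>v. (1 / N) * (\<Sum>j\<in>UNIV. v $ j powr a))"
    using integrable_component by (simp add: integral_sum)
  also have "\<dots> \<le> integral\<^sup>L Q (\<lambda>v. \<Sum>i\<in>UNIV. spa_beta_payment v i)"
    using integrable_component by (intro integral_mono_AE[OF _ integrable_revenue lower]) simp
  finally show ?thesis .
qed

lemma revenue_guarantee_spa_beta_ge_moment:
  assumes "CARD('n::finite) \<ge> 2" "mu \<in> marginal_dists"
  shows "integral\<^sup>L mu (\<lambda>x. x powr (real CARD('n) / (real CARD('n) - 1)))
           \<le> revenue_guarantee (spa_beta_payment :: real ^ 'n \<Rightarrow> 'n \<Rightarrow> real) mu"
  unfolding revenue_guarantee_def
  using assms expected_spa_beta_revenue_ge_moment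
    couplings_nonempty[OF real_distribution_marginal[OF assms(2)]]
  by (intro cINF_greatest) auto

section \<open>Moments of distributions with a concave revenue curve\<close>

lemma Bernoulli_inequality_powr:
  fixes x b :: real
  assumes "0 < x" "0 \<le> b" "b \<le> 1"
  shows "x powr b \<le> 1 - b + b * x"
proof -
  have "exp ((1 - b) * 0 + b * ln x) \<le> (1 - b) * exp 0 + b * exp (ln x)"
    using convex_onD[OF exp_convex, of b 0 "ln x"] assms by auto
  then show ?thesis using assms by (simp add: powr_def)
qed

definition tent :: "real \<Rightarrow> real \<Rightarrow> real" where
  "tent x0 t = (if t \<le> x0 then t / x0 else (1 - t) / (1 - x0))"

lemma tent_nonneg: "0 \<le> x0 \<Longrightarrow> x0 \<le> 1 \<Longrightarrow> t \<in> {0..1} \<Longrightarrow> 0 \<le> tent x0 t"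
  by (simp add: tent_def)

lemma concave_on_ge_tent:
  fixes R :: "real \<Rightarrow> real"
  assumes R: "concave_on {0..1} R" "0 \<le> R 0" "0 \<le> R 1"
    and x0: "0 < x0" "x0 < 1" and t: "t \<in> {0..1}"
  shows "R x0 * tent x0 t \<le> R t"
proof (cases "t \<le> x0")
  case True
  define l where "l = t / x0"
  have l: "0 \<le> l" "l \<le> 1" "(1 - l) * 0 + l * x0 = t"
    using True t x0 by (auto simp: l_def)
  have "(1 - l) * R 0 + l * R x0 \<le> R t"
    using concave_onD[OF R(1), of l 0 x0] l x0 by auto
  moreover have "0 \<le> (1 - l) * R 0" using l R(2) by simp
  ultimately show ?thesis using True by (simp add: tent_def l_def mult.commute)
next
  case False
  define l where "l = (t - x0) / (1 - x0)"
  have l: "0 \<le> l" "l \<le> 1" "1 - l = (1 - t) / (1 - x0)"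
    using False t x0 by (auto simp: l_def field_simps)
  have "(1 - l) * x0 + l * 1 = x0 + l * (1 - x0)" by (simp add: algebra_simps)
  also have "\<dots> = t" using x0 by (simp add: l_def)
  finally have t_eq: "(1 - l) * x0 + l * 1 = t" .
  have "(1 - l) * R x0 + l * R 1 \<le> R t"
    using concave_onD[OF R(1), of l x0 1] l t_eq x0 by auto
  moreover have "0 \<le> l * R 1" using l R(3) by simp
  ultimately show ?thesis using False l(3) by (simp add: tent_def mult.commute)
qed

lemma has_integral_weighted_tent_left:
  fixes a x0 :: real
  assumes a: "1 < a" and x0: "0 < x0"
  shows "((\<lambda>t. a * t powr (a - 2) * tent x0 t) has_integral x0 powr (a - 1)) {0..x0}"
proof -
  let ?f = "\<lambda>t. a * t powr (a - 2) * tent x0 t"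
  have "(?f has_integral (x0 powr a / x0 - 0 powr a / x0)) {0..x0}"
  proof (rule fundamental_theorem_of_calculus_interior)
    show "continuous_on {0..x0} (\<lambda>t. t powr a / x0)"
      using a x0 by (intro continuous_intros continuous_on_powr') auto
    show "((\<lambda>t. t powr a / x0) has_vector_derivative ?f t) (at t)" if "t \<in> {0<..<x0}" for t
    proof -
      have "((\<lambda>t. t powr a / x0) has_real_derivative a * t powr (a - 1) / x0) (at t)"
        using that by (auto intro!: derivative_eq_intros)
      moreover have "?f t = a * (t * t powr (a - 2)) / x0"
        using that by (simp add: tent_def)
      ultimately show ?thesis
        using that by (simp add: powr_mult_base has_real_derivative_iff_has_vector_derivative)
    qed
  qed (use x0 in simp)
  then show ?thesis
    using a x0 by (simp add: powr_diff)
qed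

lemma has_integral_weighted_tent_right:
  fixes a x0 :: real
  assumes a: "1 < a" and x0: "0 < x0" "x0 < 1"
  shows "((\<lambda>t. a * t powr (a - 2) * tent x0 t) has_integral
           (a / (a - 1) * (1 - x0 powr (a - 1)) - (1 - x0 powr a)) / (1 - x0)) {x0..1}"
proof -
  let ?f = "\<lambda>t. a * t powr (a - 2) * tent x0 t"
  let ?F = "\<lambda>t. (a / (a - 1) * t powr (a - 1) - t powr a) / (1 - x0)"
  have integral: "(?f has_integral (?F 1 - ?F x0)) {x0..1}"
  proof (rule fundamental_theorem_of_calculus_interior)
    show "continuous_on {x0..1} ?F"
      using a x0 by (intro continuous_intros continuous_on_powr') auto
    show "(?F has_vector_derivative ?f t) (at t)" if t: "t \<in> {x0<..<1}" for t
    proof -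
      have deriv: "(?F has_real_derivative
          (a / (a - 1) * ((a - 1) * t powr (a - 2)) - a * t powr (a - 1)) / (1 - x0)) (at t)"
        using t x0 a by (auto intro!: derivative_eq_intros simp: diff_diff_eq)
      have "a / (a - 1) * ((a - 1) * t powr (a - 2)) = a * t powr (a - 2)"
        using a by simp
      moreover have "t powr (a - 1) = t * t powr (a - 2)"
        using t x0 by (simp add: powr_mult_base)
      moreover have "?f t = (a * t powr (a - 2) - a * (t * t powr (a - 2))) / (1 - x0)"
        using t by (simp add: tent_def algebra_simps)
      ultimately have
        "(a / (a - 1) * ((a - 1) * t powr (a - 2)) - a * t powr (a - 1)) / (1 - x0) = ?f t"
        by simp
      with deriv show ?thesis by (simp only: has_real_derivative_iff_has_vector_derivative)
    qed
  qed (use x0 in simp)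
  have
    "?F 1 - ?F x0 = ((a / (a - 1) - 1) - (a / (a - 1) * x0 powr (a - 1) - x0 powr a)) / (1 - x0)"
    by (simp add: diff_divide_distrib)
  also have "\<dots> = (a / (a - 1) * (1 - x0 powr (a - 1)) - (1 - x0 powr a)) / (1 - x0)"
    by (rule arg_cong[where f = "\<lambda>z. z / (1 - x0)"]) (simp add: algebra_simps)
  finally show ?thesis using integral by simp
qed

definition weighted_tent_integral :: "real \<Rightarrow> real \<Rightarrow> real" where
  "weighted_tent_integral a x0 =
     x0 powr (a - 1) + (a / (a - 1) * (1 - x0 powr (a - 1)) - (1 - x0 powr a)) / (1 - x0)"

lemma has_integral_weighted_tent:
  fixes a x0 :: real
  assumes "1 < a" "0 < x0" "x0 < 1"
  shows "((\<lambda>t. a * t powr (a - 2) * tent x0 t) has_integral weighted_tent_integral a x0) {0..1}"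
  unfolding weighted_tent_integral_def using assms
  by (intro has_integral_combine[OF _ _ has_integral_weighted_tent_left has_integral_weighted_tent_right])
    auto

lemma weighted_tent_integral_ge_one:
  fixes a x0 :: real
  assumes a: "1 < a" "a \<le> 2" and x0: "0 < x0" "x0 < 1"
  shows "1 \<le> weighted_tent_integral a x0"
proof -
  define b where "b = a - 1"
  define p where "p = x0 powr b"
  have b: "0 < b" "b \<le> 1" using a by (auto simp: b_def)
  have "x0 powr a = x0 * p"
    using x0 by (simp add: p_def b_def powr_mult_base)
  then have "weighted_tent_integral a x0 = p + ((b + 1) / b * (1 - p) - (1 - x0 * p)) / (1 - x0)"
    unfolding weighted_tent_integral_def by (simp add: p_def b_def)
  then have expand: "weighted_tent_integral a x0 - 1 = ((1 - p) / b - (1 - x0)) / (1 - x0)"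
    using x0 b by (simp add: field_simps)
  have "p \<le> 1 - b + b * x0"
    using Bernoulli_inequality_powr[of x0 b] x0 b by (simp add: p_def)
  then have "1 - x0 \<le> (1 - p) / b"
    using b by (simp add: field_simps)
  then have "0 \<le> ((1 - p) / b - (1 - x0)) / (1 - x0)"
    using x0 by simp
  then show ?thesis using expand by simp
qed

lemma nn_integral_powr_derivative_Icc:
  fixes a x :: real
  assumes "0 \<le> x" "0 < a"
  shows "(\<integral>\<^sup>+t. ennreal (a * t powr (a - 1)) * indicator {0..x} t \<partial>lborel) = ennreal (x powr a)"
proof -
  have "((\<lambda>t. a * t powr (a - 1)) has_integral a * (x powr a / a)) {0..x}"
    using has_integral_powr_from_0[of "a - 1" x] assms by (intro has_integral_mult_right) simp
  then show ?thesis
    using assms by (subst nn_integral_has_integral_lebesgue') auto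
qed

lemma nn_integral_powr_eq_tail_integral:
  fixes M :: "real measure"
  assumes "sigma_finite_measure M" and sets_M: "sets M = sets borel"
    and nonneg: "AE x in M. 0 \<le> x" and a: "0 < a"
  shows "(\<integral>\<^sup>+x. ennreal (x powr a) \<partial>M)
           = (\<integral>\<^sup>+t. ennreal (a * t powr (a - 1)) * indicator {0..} t * emeasure M {t..} \<partial>lborel)"
proof -
  interpret sigma_finite_measure M by fact
  interpret pair_sigma_finite M lborel
    by (simp add: pair_sigma_finite_def sigma_finite_measure_axioms lborel.sigma_finite_measure_axioms)
  define K where "K x t = (if 0 \<le> t \<and> t \<le> x then ennreal (a * t powr (a - 1)) else 0)" for x t :: real
  have K_measurable: "case_prod K \<in> borel_measurable (M \<Otimes>\<^sub>M lborel)"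
  proof -
    have sets_eq: "sets (M \<Otimes>\<^sub>M lborel) = sets (borel \<Otimes>\<^sub>M borel)"
      by (rule sets_pair_measure_cong) (simp_all add: sets_M)
    show ?thesis
      unfolding measurable_cong_sets[OF sets_eq refl] K_def by measurable
  qed
  have inner_lborel: "(\<integral>\<^sup>+t. K x t \<partial>lborel) = ennreal (x powr a)" if "0 \<le> x" for x
  proof -
    have "K x t = ennreal (a * t powr (a - 1)) * indicator {0..x} t" for t
      by (simp add: K_def indicator_def)
    then show ?thesis using nn_integral_powr_derivative_Icc[OF that a] by simp
  qed
  have inner_M: "(\<integral>\<^sup>+x. K x t \<partial>M)
      = ennreal (a * t powr (a - 1)) * indicator {0..} t * emeasure M {t..}" for t
  proof -
    have "(\<integral>\<^sup>+x. K x t \<partial>M)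
        = (\<integral>\<^sup>+x. ennreal (a * t powr (a - 1)) * indicator {0..} t * indicator {t..} x \<partial>M)"
      by (intro nn_integral_cong) (simp add: K_def indicator_def)
    also have "\<dots>
        = ennreal (a * t powr (a - 1)) * indicator {0..} t * (\<integral>\<^sup>+x. indicator {t..} x \<partial>M)"
      by (rule nn_integral_cmult) (simp add: borel_measurable_indicator sets_M)
    also have "\<dots> = ennreal (a * t powr (a - 1)) * indicator {0..} t * emeasure M {t..}"
      by (simp add: sets_M)
    finally show ?thesis .
  qed
  have "(\<integral>\<^sup>+x. ennreal (x powr a) \<partial>M) = (\<integral>\<^sup>+x. (\<integral>\<^sup>+t. K x t \<partial>lborel) \<partial>M)"
    using nonneg by (intro nn_integral_cong_AE) (auto simp: inner_lborel)
  also have "\<dots> = (\<integral>\<^sup>+t. (\<integral>\<^sup>+x. K x t \<partial>M) \<partial>lborel)"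
    by (rule Fubini'[OF K_measurable, symmetric])
  finally show ?thesis by (simp add: inner_M)
qed

definition revenue_curve :: "real measure \<Rightarrow> real \<Rightarrow> real" where
  "revenue_curve mu = (\<lambda>x. x * (1 - cdf mu x))"

lemma revenue_curve_endpoints:
  assumes "mu \<in> marginal_dists"
  shows "revenue_curve mu 0 = 0" and "revenue_curve mu 1 = 0"
proof -
  interpret real_distribution mu using assms by (rule real_distribution_marginal)
  have "1 = measure mu {0..1}" using assms by (simp add: marginal_dists_def)
  also have "\<dots> \<le> cdf mu 1" unfolding cdf_def2 by (intro finite_measure_mono) auto
  finally have "cdf mu 1 = 1" using cdf_bounded_prob[of 1] by linarith
  then show "revenue_curve mu 0 = 0" "revenue_curve mu 1 = 0"
    by (simp_all add: revenue_curve_def)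
qed

lemma revenue_curve_le_tail:
  assumes "real_distribution mu" "0 \<le> t"
  shows "revenue_curve mu t \<le> t * measure mu {t..}"
proof -
  interpret real_distribution mu by fact
  have "1 - cdf mu t = prob (space mu - {..t})"
    using prob_compl[of "{..t}"] by (simp add: cdf_def2)
  also have "\<dots> \<le> measure mu {t..}"
    by (intro finite_measure_mono) auto
  finally show ?thesis
    unfolding revenue_curve_def using assms(2) by (simp add: mult_left_mono)
qed

lemma tent_bound_le_tail_integrand:
  fixes a x0 t :: real
  assumes mu: "mu \<in> marginal_dists" and concave: "concave_on {0..1} (revenue_curve mu)"
    and a: "1 < a" and x0: "0 < x0" "x0 < 1"
  shows "ennreal (revenue_curve mu x0 * (a * t powr (a - 2) * tent x0 t)) * indicator {0..1} t
           \<le> ennreal (a * t powr (a - 1)) * indicator {0..} t * emeasure mu {t..}"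
proof (cases "t \<in> {0<..1}")
  case True
  interpret real_distribution mu using mu by (rule real_distribution_marginal)
  have "revenue_curve mu x0 * tent x0 t \<le> revenue_curve mu t"
    using concave revenue_curve_endpoints[OF mu] x0 True by (intro concave_on_ge_tent) auto
  also have "\<dots> \<le> t * measure mu {t..}"
    using revenue_curve_le_tail[OF real_distribution_axioms] True by simp
  finally have "a * t powr (a - 2) * (revenue_curve mu x0 * tent x0 t)
      \<le> a * t powr (a - 2) * (t * measure mu {t..})"
    using a by (intro mult_left_mono) auto
  also have "\<dots> = a * t powr (a - 1) * measure mu {t..}"
    using True by (simp add: powr_mult_base mult_ac)
  finally have "revenue_curve mu x0 * (a * t powr (a - 2) * tent x0 t)
      \<le> a * t powr (a - 1) * measure mu {t..}"
    by (simp add: mult_ac)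
  moreover have "ennreal (a * t powr (a - 1)) * indicator {0..} t * emeasure mu {t..}
      = ennreal (a * t powr (a - 1) * measure mu {t..})"
    using True a by (simp add: emeasure_eq_measure ennreal_mult)
  ultimately show ?thesis
    using True by (simp add: ennreal_leI)
next
  case False
  then have "t \<notin> {0..1} \<or> t = 0" by auto
  then show ?thesis by auto
qed

lemma revenue_curve_le_powr_moment:
  fixes a :: real
  assumes mu: "mu \<in> marginal_dists" and concave: "concave_on {0..1} (revenue_curve mu)"
    and a: "1 < a" "a \<le> 2" and x0: "x0 \<in> {0..1}"
  shows "revenue_curve mu x0 \<le> integral\<^sup>L mu (\<lambda>x. x powr a)"
proof -
  interpret real_distribution mu using mu by (rule real_distribution_marginal)
  let ?R = "revenue_curve mu"
  have moment_nonneg: "0 \<le> integral\<^sup>L mu (\<lambda>x. x powr a)" by simp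
  show ?thesis
  proof (cases "?R x0 \<le> 0")
    case True
    with moment_nonneg show ?thesis by linarith
  next
    case False
    then have x0_inner: "0 < x0" "x0 < 1"
      using revenue_curve_endpoints[OF mu] x0 by (auto simp: less_le)
    let ?g = "\<lambda>t. ?R x0 * (a * t powr (a - 2) * tent x0 t)"
    have "(?g has_integral ?R x0 * weighted_tent_integral a x0) {0..1}"
      using a x0_inner by (intro has_integral_mult_right has_integral_weighted_tent)
    then have "(\<integral>\<^sup>+t. ennreal (?g t) * indicator {0..1} t \<partial>lborel)
        = ennreal (?R x0 * weighted_tent_integral a x0)"
      using False a x0_inner
      by (intro nn_integral_has_integral_lebesgue') (auto intro!: mult_nonneg_nonneg tent_nonneg)
    moreover have "ennreal (?R x0) \<le> ennreal (?R x0 * weighted_tent_integral a x0)"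
      using False weighted_tent_integral_ge_one[OF a x0_inner] by (intro ennreal_leI) simp
    ultimately have "ennreal (?R x0) \<le> (\<integral>\<^sup>+t. ennreal (?g t) * indicator {0..1} t \<partial>lborel)"
      by simp
    also have "\<dots> \<le> (\<integral>\<^sup>+t. ennreal (a * t powr (a - 1)) * indicator {0..} t * emeasure mu {t..} \<partial>lborel)"
      using mu concave a(1) x0_inner by (intro nn_integral_mono tent_bound_le_tail_integrand)
    also have "\<dots> = (\<integral>\<^sup>+x. ennreal (x powr a) \<partial>mu)"
      using AE_marginal_unit_interval[OF mu] a
      by (intro nn_integral_powr_eq_tail_integral[symmetric] sigma_finite_measure_axioms)
        (auto elim: eventually_mono)
    also have "\<dots> = ennreal (integral\<^sup>L mu (\<lambda>x. x powr a))"
      using integrable_powr_marginal[OF mu] a by (intro nn_integral_eq_integral) auto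
    finally show ?thesis using moment_nonneg by (simp add: ennreal_le_iff)
  qed
qed

lemma posted_price_guarantee_le_powr_moment:
  fixes a :: real
  assumes "mu \<in> marginal_dists" "concave_on {0..1} (revenue_curve mu)" "1 < a" "a \<le> 2"
  shows "posted_price_guarantee mu \<le> integral\<^sup>L mu (\<lambda>x. x powr a)"
  using revenue_curve_le_powr_moment[OF assms]
  unfolding posted_price_guarantee_def revenue_curve_def by (intro cSUP_least) auto

section \<open>The uniform distribution\<close>

definition uniform01 :: "real measure" where
  "uniform01 = uniform_measure lborel {0..1}"

lemma uniform01_marginal: "uniform01 \<in> marginal_dists"
  unfolding marginal_dists_def uniform01_def by (auto intro!: prob_space_uniform_measure)

lemma cdf_uniform01: "x \<in> {0..1} \<Longrightarrow> cdf uniform01 x = x"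
proof -
  assume x: "x \<in> {0..1}"
  have "cdf uniform01 x = measure lborel ({0..1} \<inter> {..x}) / measure lborel {0..1::real}"
    unfolding cdf_def2 uniform01_def by (rule measure_uniform_measure) auto
  also have "{0..1} \<inter> {..x} = {0..x}" using x by auto
  finally show ?thesis using x by simp
qed

lemma concave_revenue_curve_uniform01: "concave_on {0..1} (revenue_curve uniform01)"
  unfolding concave_on_iff revenue_curve_def
proof (intro conjI ballI allI impI)
  fix x y u v :: real
  assume xy: "x \<in> {0..1}" "y \<in> {0..1}" and uv: "0 \<le> u" "0 \<le> v" "u + v = 1"
  have z: "u *\<^sub>R x + v *\<^sub>R y \<in> {0..1}"
    using convexD[OF convex_real_interval(5)[of 0 1] xy uv] by simp
  have "(u * x + v * y) * (1 - (u * x + v * y)) - (u * (x * (1 - x)) + v * (y * (1 - y)))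
      = u * v * (x - y)\<^sup>2"
  proof -
    have v: "v = 1 - u" using uv(3) by simp
    show ?thesis unfolding v by (simp add: algebra_simps power2_eq_square)
  qed
  moreover have "0 \<le> u * v * (x - y)\<^sup>2" using uv by simp
  ultimately show "u * (x * (1 - cdf uniform01 x)) + v * (y * (1 - cdf uniform01 y))
      \<le> (u *\<^sub>R x + v *\<^sub>R y) * (1 - cdf uniform01 (u *\<^sub>R x + v *\<^sub>R y))"
    using cdf_uniform01[OF xy(1)] cdf_uniform01[OF xy(2)] cdf_uniform01[OF z] by simp
qed simp

lemma posted_price_guarantee_uniform01: "posted_price_guarantee uniform01 \<le> 1 / 4"
  unfolding posted_price_guarantee_def
proof (rule cSUP_least)
  fix x :: real
  assume x: "x \<in> {0..1}"
  have "x * (1 - x) \<le> 1 / 4"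
    using zero_le_power2[of "x - 1 / 2"] by (simp add: algebra_simps power2_eq_square)
  then show "x * (1 - cdf uniform01 x) \<le> 1 / 4" using cdf_uniform01[OF x] by simp
qed simp

lemma integral_powr_uniform01:
  fixes a :: real
  assumes a: "0 < a"
  shows "integral\<^sup>L uniform01 (\<lambda>x. x powr a) = 1 / (a + 1)"
proof -
  interpret real_distribution uniform01 by (rule real_distribution_marginal[OF uniform01_marginal])
  have "(\<integral>\<^sup>+x. ennreal (x powr a) \<partial>uniform01)
      = (\<integral>\<^sup>+x. ennreal (x powr a) * indicator {0..1} x \<partial>lborel)"
    unfolding uniform01_def by (subst nn_integral_uniform_measure) (auto simp: divide_ennreal_def)
  also have "\<dots> = ennreal (1 / (a + 1))"
    using has_integral_powr_from_0[of a 1] a by (subst nn_integral_has_integral_lebesgue') auto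
  finally have "ennreal (integral\<^sup>L uniform01 (\<lambda>x. x powr a)) = ennreal (1 / (a + 1))"
    using nn_integral_eq_integral[OF integrable_powr_marginal[OF uniform01_marginal]] a by simp
  then show ?thesis using a by (simp add: ennreal_inj)
qed

theorem proposition2:
  assumes "CARD('n::finite) \<ge> 2"
  shows "robustly_dominates
           (revenue_guarantee (spa_beta_payment :: real ^ 'n \<Rightarrow> 'n \<Rightarrow> real))
           posted_price_guarantee
           {mu \<in> marginal_dists. concave_on {0..1} (\<lambda>x. x * (1 - cdf mu x))}"
proof -
  let ?G = "revenue_guarantee (spa_beta_payment :: real ^ 'n \<Rightarrow> 'n \<Rightarrow> real)"
  define a where "a = real CARD('n) / (real CARD('n) - 1)"
  have a: "1 < a" "a \<le> 2" using assms by (simp_all add: a_def field_simps)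
  have moment_le_guarantee: "integral\<^sup>L mu (\<lambda>x. x powr a) \<le> ?G mu"
    if "mu \<in> marginal_dists" for mu
    unfolding a_def by (rule revenue_guarantee_spa_beta_ge_moment[OF assms that])
  have "posted_price_guarantee uniform01 \<le> 1 / 4" by (rule posted_price_guarantee_uniform01)
  also have "\<dots> < integral\<^sup>L uniform01 (\<lambda>x. x powr a)"
    using a by (simp add: integral_powr_uniform01)
  also have "\<dots> \<le> ?G uniform01"
    by (rule moment_le_guarantee[OF uniform01_marginal])
  finally have strict: "posted_price_guarantee uniform01 < ?G uniform01" .
  show ?thesis
    unfolding robustly_dominates_def revenue_curve_def[symmetric]
    using posted_price_guarantee_le_powr_moment[OF _ _ a] moment_le_guarantee order_trans
      strict uniform01_marginal concave_revenue_curve_uniform01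
    by blast
qed

end
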